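(* Let $M>0$ and let $b:[0,1]\to\mathbb R$ satisfy $|b(a)|\le M$ for all $a$ and $b(0)=1$. Then there exist $f\in C^{1/2}_c[\frac14,\frac12]$ and $u_0\in(0,\frac{1}{80M})$ such that $L_af(u_0)$ does not converge to $L_0f(u_0)$ as $a\to0^+$.
   Context: For $a>0$ and $f\in L^1(\mathbb R)$, $L_af(u)=\frac{1}{\sqrt{2\pi}}\frac{e^{i\pi/4}}{\sqrt{2a}}\int_{\mathbb R}f(t)e^{-i\frac{(b(a)u-t)^2}{4a}}dt$, and $L_0f(u)=f(b(0)u)=f(u)$. $C^{1/2}_c[\frac14,\frac12]$ denotes complex-valued functions supported in $[\frac14,\frac12]$ that are Hölder continuous of exponent $\frac12$, i.e. $|f(t_1)-f(t_2)|\le C|t_1-t_2|^{1/2}$ for all $t_1,t_2$. *)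

theory Defs
  imports "HOL-Analysis.Analysis"
begin

definition Lop :: "(real \<Rightarrow> real) \<Rightarrow> real \<Rightarrow> (real \<Rightarrow> complex) \<Rightarrow> real \<Rightarrow> complex" where
  "Lop b a f u =
     (if a = 0 then f (b 0 * u)
      else complex_of_real (1 / sqrt (2 * pi)) * exp (\<i> * complex_of_real (pi / 4))
           / complex_of_real (sqrt (2 * a))
           * integral UNIV (\<lambda>t. f t * exp (- \<i> * complex_of_real ((b a * u - t)^2 / (4 * a)))))"

definition holder_half_supp :: "(real \<Rightarrow> complex) \<Rightarrow> bool" where
  "holder_half_supp f \<longleftrightarrow>
     (\<forall>t. t \<notin> {1/4..1/2} \<longrightarrow> f t = 0) \<and>
     (\<exists>C. \<forall>t1 t2. norm (f t1 - f t2) \<le> C * sqrt \<bar>t1 - t2\<bar>)"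

end

theory Submission
  imports Defs
begin

text \<open>The function is a lacunary sum of chirps
  \<open>s\<^sub>m bump(t) exp(\<i> (t - x\<^sub>m)\<^sup>2 / (4 s\<^sub>m\<^sup>2))\<close> with \<open>s\<^sub>m = (1/100)^(m+2)\<close> and
  \<open>x\<^sub>m = b(s\<^sub>m\<^sup>2) u\<^sub>0\<close>. For \<open>a = s\<^sub>n\<^sup>2\<close> the kernel of \<open>L\<^sub>a\<close> removes the phase of the \<open>n\<close>-th chirp
  exactly, so that chirp contributes \<open>s\<^sub>n / 384\<close> to the integral, while the coarser chirps
  are killed by the remaining oscillation and the finer ones are too small. After the
  normalisation \<open>1 / sqrt a \<sim> 1 / s\<^sub>n\<close>, \<open>|L\<^sub>a f(u\<^sub>0)|\<close> stays above \<open>1/2000\<close> along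
  \<open>a = s\<^sub>n\<^sup>2 \<rightarrow> 0\<close>, whereas \<open>L\<^sub>0 f(u\<^sub>0) = f(u\<^sub>0) = 0\<close> because \<open>u\<^sub>0 < 1/4\<close>.
  The geometric decay of \<open>s\<^sub>m\<close> is what makes the sum \<open>1/2\<close>-Hoelder.\<close>

definition bump :: "real \<Rightarrow> real" where
  "bump t = (if t \<in> {1/4..1/2} then (t - 1/4) * (1/2 - t) else 0)"

lemma bump_nonneg: "0 \<le> bump t"
  unfolding bump_def by auto

lemma bump_le: "bump t \<le> 1/64"
proof -
  have "(t - 1/4) * (1/2 - t) \<le> 1/64"
    using sum_squares_ge_zero[of "t - 3/8" 0] by (simp add: algebra_simps power2_eq_square)
  then show ?thesis unfolding bump_def by auto
qed

lemma bump_eq_0: "t \<notin> {1/4<..<1/2} \<Longrightarrow> bump t = 0"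
  unfolding bump_def by auto

lemma has_integral_bump: "((\<lambda>t. complex_of_real (bump t)) has_integral complex_of_real (1/384)) {1/4..1/2}"
proof -
  define P where "P t = complex_of_real ((3/8) * t^2 - (1/3) * t^3 - (1/8) * t)" for t :: real
  have "((\<lambda>t. complex_of_real ((t - 1/4) * (1/2 - t))) has_integral (P (1/2) - P (1/4))) {1/4..1/2}"
  proof (rule fundamental_theorem_of_calculus)
    fix t :: real
    have "((\<lambda>t. (3/8) * t^2 - (1/3) * t^3 - (1/8) * t) has_real_derivative ((t - 1/4) * (1/2 - t))) (at t)"
      by (rule derivative_eq_intros refl)+ (simp add: algebra_simps power2_eq_square)
    then show "(P has_vector_derivative complex_of_real ((t - 1/4) * (1/2 - t))) (at t within {1/4..1/2})"
      unfolding P_def by (rule has_vector_derivative_at_within[OF has_vector_derivative_of_real])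
  qed simp
  moreover have "P (1/2) - P (1/4) = complex_of_real (1/384)"
    unfolding P_def of_real_diff[symmetric] by (rule arg_cong[where f=of_real]) (simp add: power2_eq_square power3_eq_cube)
  ultimately show ?thesis
    by (subst has_integral_cong[where g="\<lambda>t. complex_of_real ((t - 1/4) * (1/2 - t))"]) (auto simp: bump_def)
qed

lemma norm_exp_i_diff_le: "norm (exp (\<i> * of_real a) - exp (\<i> * of_real b)) \<le> 2 * \<bar>a - b\<bar>"
proof -
  have "\<bar>cos a - cos b\<bar> = 2 * \<bar>sin ((a + b) / 2)\<bar> * \<bar>sin ((b - a) / 2)\<bar>"
    by (simp add: cos_diff_cos abs_mult)
  also have "\<dots> \<le> 2 * 1 * \<bar>(b - a) / 2\<bar>"
    by (intro mult_mono abs_sin_x_le_abs_x) auto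
  finally have cos: "\<bar>cos a - cos b\<bar> \<le> \<bar>a - b\<bar>" by simp
  have "\<bar>sin a - sin b\<bar> = 2 * \<bar>sin ((a - b) / 2)\<bar> * \<bar>cos ((a + b) / 2)\<bar>"
    by (simp add: sin_diff_sin abs_mult)
  also have "\<dots> \<le> 2 * \<bar>(a - b) / 2\<bar> * 1"
    by (intro mult_mono abs_sin_x_le_abs_x) auto
  finally have sin: "\<bar>sin a - sin b\<bar> \<le> \<bar>a - b\<bar>" by simp
  have "exp (\<i> * of_real a) - exp (\<i> * of_real b) = Complex (cos a - cos b) (sin a - sin b)"
    by (simp add: cis_conv_exp[symmetric] complex_eq_iff)
  then show ?thesis
    using cmod_le[of "Complex (cos a - cos b) (sin a - sin b)"] cos sin by simp
qed

lemma lipschitz_extend_by_zero: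
  fixes g :: "real \<Rightarrow> 'a::real_normed_vector"
  assumes zero: "\<And>t. t \<notin> {a<..<b} \<Longrightarrow> g t = 0"
    and lip: "\<And>t1 t2. t1 \<in> {a..b} \<Longrightarrow> t2 \<in> {a..b} \<Longrightarrow> norm (g t1 - g t2) \<le> L * \<bar>t1 - t2\<bar>"
    and "a \<le> b" and "0 \<le> L"
  shows "norm (g t1 - g t2) \<le> L * \<bar>t1 - t2\<bar>"
proof -
  define c where "c t = max a (min b t)" for t
  have gc: "g (c t) = g t" for t
    by (cases "t \<in> {a<..<b}") (use zero \<open>a \<le> b\<close> in \<open>auto simp: c_def\<close>)
  have "norm (g t1 - g t2) = norm (g (c t1) - g (c t2))" by (simp add: gc)
  also have "\<dots> \<le> L * \<bar>c t1 - c t2\<bar>" by (rule lip) (use \<open>a \<le> b\<close> in \<open>auto simp: c_def\<close>)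
  also have "\<dots> \<le> L * \<bar>t1 - t2\<bar>" by (rule mult_left_mono) (use \<open>0 \<le> L\<close> in \<open>auto simp: c_def\<close>)
  finally show ?thesis .
qed

lemma continuous_on_if_holder:
  fixes f :: "real \<Rightarrow> 'a::real_normed_vector"
  assumes "\<And>t1 t2. norm (f t1 - f t2) \<le> C * sqrt \<bar>t1 - t2\<bar>"
  shows "continuous_on S f"
  unfolding continuous_on_iff
proof (intro ballI allI impI)
  fix x e :: real assume "0 < e"
  define K where "K = \<bar>C\<bar> + 1"
  have K: "0 < K" unfolding K_def by simp
  show "\<exists>d>0. \<forall>x'\<in>S. dist x' x < d \<longrightarrow> dist (f x') (f x) < e"
  proof (intro exI[of _ "(e / K)^2"] conjI ballI impI)
    show "0 < (e / K)^2" using \<open>0 < e\<close> K by simp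
    fix x' assume "dist x' x < (e / K)^2"
    then have "sqrt \<bar>x' - x\<bar> < sqrt ((e / K)^2)"
      unfolding dist_real_def by (rule real_sqrt_less_mono)
    also have "\<dots> = e / K" using \<open>0 < e\<close> K by simp
    finally have "sqrt \<bar>x' - x\<bar> < e / K" .
    then have "K * sqrt \<bar>x' - x\<bar> < e" using K by (simp add: field_simps)
    moreover have "C * sqrt \<bar>x' - x\<bar> \<le> K * sqrt \<bar>x' - x\<bar>"
      unfolding K_def by (intro mult_right_mono) auto
    ultimately show "dist (f x') (f x) < e"
      using assms[of x' x] by (simp add: dist_norm)
  qed
qed

definition scale :: "nat \<Rightarrow> real" where
  "scale m = (1/100)^(m+2)"

lemma scale_pos: "0 < scale m"
  unfolding scale_def by simp

lemma scale_le: "scale m \<le> 1/10000"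
proof -
  have "(1/100::real)^(m+2) \<le> (1/100)^2" by (rule power_decreasing) auto
  then show ?thesis unfolding scale_def by (simp add: power2_eq_square)
qed

lemma scale_Suc: "scale (Suc m) = scale m / 100"
  unfolding scale_def by simp

lemma scale_less: "m < n \<Longrightarrow> scale n \<le> scale m / 100"
proof -
  assume "m < n"
  have "(1/100::real)^(n+2) \<le> (1/100)^(Suc m+2)" by (rule power_decreasing) (use \<open>m < n\<close> in auto)
  then show ?thesis using scale_Suc[of m] unfolding scale_def by simp
qed

lemma summable_scale: "summable scale"
  unfolding scale_def by (simp add: summable_mult power_add)

lemma suminf_scale_shift: "(\<Sum>k. scale (k + N)) = scale N * 100 / 99"
proof -
  have "(\<lambda>k. scale (k + N)) = (\<lambda>k. scale N * (1/100)^k)"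
    unfolding scale_def by (simp add: power_add algebra_simps)
  then show ?thesis by (simp add: suminf_mult suminf_geometric)
qed

lemma sum_inverse_scale_le: "(\<Sum>m<Suc K. 1 / scale m) \<le> 100 / (99 * scale K)"
proof -
  have "(\<Sum>m<N. 100^(m+2)::real) \<le> 100^(N+2) / 99" for N
    by (induction N) simp_all
  from this[of "Suc K"]
  show ?thesis by (simp add: scale_def power_one_over)
qed

lemma scale_threshold:
  assumes "0 < d"
  obtains N where "scale N \<le> d" and "\<And>m. m < N \<Longrightarrow> d < scale m"
proof -
  obtain n where "(1/100::real)^n < d" using real_arch_pow_inv[OF assms, of "1/100"] by auto
  moreover have "scale n \<le> (1/100)^n" unfolding scale_def by (rule power_decreasing) auto
  ultimately have "\<exists>n. scale n \<le> d" by (intro exI[of _ n]) linarith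
  then have "scale (LEAST n. scale n \<le> d) \<le> d" by (rule LeastI_ex)
  moreover have "d < scale m" if "m < (LEAST n. scale n \<le> d)" for m
    using not_less_Least[OF that] by simp
  ultimately show thesis by (rule that)
qed

lemma filterlim_scale_sq_at_right_0: "filterlim (\<lambda>n. (scale n)^2) (at_right 0) sequentially"
proof (rule tendsto_imp_filterlim_at_right)
  have "(\<lambda>n. (1/100::real)^(n+2)) \<longlonglongrightarrow> 0"
    by (rule LIMSEQ_ignore_initial_segment, rule LIMSEQ_power_zero) simp
  then show "(\<lambda>n. (scale n)^2) \<longlonglongrightarrow> 0"
    unfolding scale_def using tendsto_power[of _ 0 sequentially 2] by fastforce
  show "\<forall>\<^sub>F n in sequentially. 0 < (scale n)^2"
    using scale_pos by (intro always_eventually allI) (metis less_irrefl zero_less_power2)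
qed

text \<open>A sum of terms of size \<open>scale m\<close> with Lipschitz constants \<open>1 / scale m\<close> is
  \<open>1/2\<close>-Hoelder: at distance \<open>\<Delta>\<close>, the terms with \<open>scale m > sqrt \<Delta>\<close> are estimated by their
  Lipschitz bound and the others by their size; both geometric sums are \<open>O(sqrt \<Delta>)\<close>.\<close>
lemma lacunary_sum_holder_half:
  fixes g :: "nat \<Rightarrow> real \<Rightarrow> 'a::banach"
  assumes size: "\<And>m t. norm (g m t) \<le> scale m"
    and lip: "\<And>m t1 t2. norm (g m t1 - g m t2) \<le> \<bar>t1 - t2\<bar> / scale m"
  shows "norm ((\<Sum>m. g m t1) - (\<Sum>m. g m t2)) \<le> 4 * sqrt \<bar>t1 - t2\<bar>"
proof (cases "t1 = t2")
  case False
  define \<Delta> where "\<Delta> = \<bar>t1 - t2\<bar>"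
  define d where "d = sqrt \<Delta>"
  have \<Delta>: "0 < \<Delta>" and d: "0 < d" and \<Delta>_eq: "\<Delta> = d * d"
    using False by (auto simp: \<Delta>_def d_def)
  have summable_g: "summable (\<lambda>m. g m t)" for t
    by (rule summable_comparison_test[OF _ summable_scale]) (use size in auto)
  obtain N where N: "scale N \<le> d" and below_N: "\<And>m. m < N \<Longrightarrow> d < scale m"
    using scale_threshold[OF d] by blast
  define B where "B m = (if m < N then \<Delta> / scale m else 2 * scale m)" for m
  have DB: "norm (g m t1 - g m t2) \<le> B m" for m
    using lip[of m t1 t2] norm_triangle_ineq4[of "g m t1" "g m t2"] size[of m t1] size[of m t2]
    by (auto simp: B_def \<Delta>_def)
  have sB: "summable B"
  proof -
    have "eventually (\<lambda>m. 2 * scale m = B m) sequentially"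
      unfolding B_def eventually_sequentially by (intro exI[of _ N]) auto
    then show ?thesis using summable_cong summable_mult[OF summable_scale, of 2] by metis
  qed
  have "(\<Sum>m. B (m + N)) = 2 * (scale N * 100 / 99)"
    using suminf_mult[OF summable_ignore_initial_segment[OF summable_scale, of N], of 2]
    by (simp add: B_def suminf_scale_shift)
  moreover have "(\<Sum>m<N. B m) \<le> 100 * d / 99"
  proof (cases N)
    case (Suc K)
    have "(\<Sum>m<N. B m) = \<Delta> * (\<Sum>m<Suc K. 1 / scale m)"
      unfolding sum_distrib_left by (intro sum.cong) (auto simp: B_def Suc)
    also have "\<dots> \<le> \<Delta> * (100 / (99 * scale K))"
      using \<Delta> sum_inverse_scale_le by (intro mult_left_mono) auto
    also have "\<dots> \<le> \<Delta> * (100 / (99 * d))"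
      using below_N[of K] Suc \<Delta> d by (intro mult_left_mono divide_left_mono) auto
    finally show ?thesis using d by (simp add: \<Delta>_eq)
  qed (use d in simp)
  moreover have "norm ((\<Sum>m. g m t1) - (\<Sum>m. g m t2)) \<le> suminf B"
    using norm_suminf_le[OF DB sB] suminf_diff[OF summable_g[of t1] summable_g[of t2]] by simp
  ultimately have "norm ((\<Sum>m. g m t1) - (\<Sum>m. g m t2)) \<le> 2 * (scale N * 100 / 99) + 100 * d / 99"
    using suminf_split_initial_segment[OF sB, of N] by linarith
  then show ?thesis using N d unfolding d_def \<Delta>_def by linarith
qed simp

lemma has_vector_derivative_exp_ii:
  assumes "(Psi has_real_derivative Psi') (at t)"
  shows "((\<lambda>t. exp (\<i> * of_real (Psi t))) has_vector_derivative
           of_real Psi' * (\<i> * exp (\<i> * of_real (Psi t)))) (at t)"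
proof -
  have "((\<lambda>z. exp (\<i> * z)) has_field_derivative \<i> * exp (\<i> * of_real (Psi t))) (at (of_real (Psi t)))"
    by (auto intro!: derivative_eq_intros)
  from field_vector_diff_chain_at[OF has_vector_derivative_of_real[OF assms] this]
  show ?thesis by (simp add: o_def)
qed

text \<open>Integration by parts: a primitive of the difference of the two integrands is
  \<open>(bump / \<Psi>') \<cdot> (-\<i> e\<^sup>i\<^sup>\<Psi>)\<close>, which vanishes at both ends of the interval.\<close>
lemma has_integral_bump_exp_by_parts:
  fixes Psi Psi' :: "real \<Rightarrow> real"
  assumes dPsi: "\<And>t. (Psi has_real_derivative Psi' t) (at t)"
    and dPsi': "\<And>t. (Psi' has_real_derivative A) (at t)"
    and nz: "\<And>t. t \<in> {1/4..1/2} \<Longrightarrow> Psi' t \<noteq> 0"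
  shows "((\<lambda>t. \<i> * of_real (((3/4 - 2*t) * Psi' t - (t - 1/4) * (1/2 - t) * A) / (Psi' t)^2)
              * exp (\<i> * of_real (Psi t)))
          has_integral integral {1/4..1/2} (\<lambda>t. of_real (bump t) * exp (\<i> * of_real (Psi t))))
         {1/4..1/2}"
    (is "(?R has_integral _) ?I")
proof -
  define p where "p t = (t - 1/4) * (1/2 - t)" for t :: real
  define E where "E t = exp (\<i> * complex_of_real (Psi t))" for t
  define q where "q t = p t / Psi' t" for t
  define F where "F t = complex_of_real (p t) * E t" for t
  define G where "G t = complex_of_real (q t) * (- \<i> * E t)" for t
  have dE: "(E has_vector_derivative (complex_of_real (Psi' t) * (\<i> * E t))) (at t)" for t
    unfolding E_def by (rule has_vector_derivative_exp_ii[OF dPsi])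
  define q' where "q' t = ((3/4 - 2*t) * Psi' t - p t * A) / (Psi' t)^2" for t
  have dq: "(q has_real_derivative q' t) (at t)" if "t \<in> ?I" for t
  proof -
    have "(p has_real_derivative (3/4 - 2*t)) (at t)"
      unfolding p_def by (auto intro!: derivative_eq_intros simp: algebra_simps)
    from DERIV_divide[OF this dPsi' nz[OF that]]
    show ?thesis unfolding q_def q'_def by (simp add: power2_eq_square)
  qed
  have dG: "(G has_vector_derivative (F t - ?R t)) (at t within ?I)" if "t \<in> ?I" for t
  proof -
    have "((\<lambda>t. - \<i> * E t) has_vector_derivative - \<i> * (of_real (Psi' t) * (\<i> * E t))) (at t)"
      using has_vector_derivative_mult[OF has_vector_derivative_const[of "- \<i>"] dE[of t]] by simp
    from has_vector_derivative_mult[OF has_vector_derivative_of_real[OF dq[OF that]] this]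
    have dG_at: "(G has_vector_derivative
        of_real (q t) * (- \<i> * (of_real (Psi' t) * (\<i> * E t))) + of_real (q' t) * (- \<i> * E t)) (at t)"
      unfolding G_def .
    have "q t * Psi' t = p t" unfolding q_def using nz[OF that] by simp
    then have "of_real (q t) * of_real (Psi' t) = (of_real (p t) :: complex)"
      by (metis of_real_mult)
    moreover have "?R t = \<i> * of_real (q' t) * E t" unfolding q'_def p_def E_def by simp
    ultimately have "of_real (q t) * (- \<i> * (of_real (Psi' t) * (\<i> * E t))) + of_real (q' t) * (- \<i> * E t)
        = F t - ?R t"
      unfolding F_def by (simp add: algebra_simps)
    with dG_at show ?thesis by (auto intro: has_vector_derivative_at_within)
  qed
  have "((\<lambda>t. F t - ?R t) has_integral G (1/2) - G (1/4)) ?I"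
    using dG by (intro fundamental_theorem_of_calculus) auto
  moreover have "G (1/2) - G (1/4) = 0" unfolding G_def q_def p_def by simp
  moreover have "F integrable_on ?I"
    using DERIV_isCont[OF dPsi] unfolding F_def E_def p_def
    by (intro integrable_continuous_interval continuous_intros continuous_at_imp_continuous_on) auto
  ultimately have "(?R has_integral integral ?I F) ?I"
    using has_integral_diff[OF integrable_integral] by fastforce
  moreover have "integral ?I F = integral ?I (\<lambda>t. of_real (bump t) * exp (\<i> * of_real (Psi t)))"
    by (rule integral_cong) (simp add: F_def E_def p_def bump_def)
  ultimately show ?thesis by simp
qed

lemma norm_integral_bump_exp_le:
  fixes Psi Psi' :: "real \<Rightarrow> real"
  assumes dPsi: "\<And>t. (Psi has_real_derivative Psi' t) (at t)"
    and dPsi': "\<And>t. (Psi' has_real_derivative A) (at t)"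
    and lam: "lam > 0" "\<And>t. t \<in> {1/4..1/2} \<Longrightarrow> lam \<le> \<bar>Psi' t\<bar>"
  shows "norm (integral {1/4..1/2} (\<lambda>t. of_real (bump t) * exp (\<i> * of_real (Psi t))))
           \<le> (1/4) * ((1/4) / lam + (1/64) * \<bar>A\<bar> / lam^2)"
proof -
  define B where "B = (1/4) / lam + (1/64) * \<bar>A\<bar> / lam^2"
  let ?D = "\<lambda>t. ((3/4 - 2*t) * Psi' t - (t - 1/4) * (1/2 - t) * A) / (Psi' t)^2"
  have D_le: "\<bar>?D t\<bar> \<le> B" if t: "t \<in> {1/4..1/2}" for t
  proof -
    have Psi': "lam \<le> \<bar>Psi' t\<bar>" "lam^2 \<le> (Psi' t)^2"
      using lam(2)[OF t] power_mono[OF lam(2)[OF t], of 2] lam(1) by auto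
    have p: "0 \<le> (t - 1/4) * (1/2 - t)" "(t - 1/4) * (1/2 - t) \<le> 1/64"
      using bump_le[of t] t by (auto simp: bump_def)
    have "((3/4 - 2*t) * Psi' t - (t - 1/4) * (1/2 - t) * A) / (Psi' t)^2
        = (3/4 - 2*t) / Psi' t - (t - 1/4) * (1/2 - t) * A / (Psi' t)^2"
      using lam(1) Psi' by (simp add: diff_divide_distrib power2_eq_square)
    then have "\<bar>((3/4 - 2*t) * Psi' t - (t - 1/4) * (1/2 - t) * A) / (Psi' t)^2\<bar>
        = \<bar>(3/4 - 2*t) / Psi' t - (t - 1/4) * (1/2 - t) * A / (Psi' t)^2\<bar>" by simp
    also have "\<dots> \<le> \<bar>(3/4 - 2*t) / Psi' t\<bar> + \<bar>(t - 1/4) * (1/2 - t) * A / (Psi' t)^2\<bar>"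
      by (rule abs_triangle_ineq4)
    also have "\<dots> = \<bar>3/4 - 2*t\<bar> / \<bar>Psi' t\<bar> + (t - 1/4) * (1/2 - t) * \<bar>A\<bar> / (Psi' t)^2"
      using t by (simp add: abs_mult abs_divide)
    also have "\<dots> \<le> B"
      unfolding B_def
    proof (rule add_mono)
      show "\<bar>3/4 - 2*t\<bar> / \<bar>Psi' t\<bar> \<le> (1/4) / lam"
        using t Psi' lam(1) by (intro frac_le) (auto simp: abs_if)
      show "(t - 1/4) * (1/2 - t) * \<bar>A\<bar> / (Psi' t)^2 \<le> (1/64) * \<bar>A\<bar> / lam^2"
        using p Psi' lam(1) by (intro frac_le mult_mono) auto
    qed
    finally show ?thesis .
  qed
  have "Psi' t \<noteq> 0" if "t \<in> {1/4..1/2}" for t using lam that by force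
  note by_parts = has_integral_bump_exp_by_parts[OF dPsi dPsi' this]
  have "norm (\<i> * of_real (?D t) * exp (\<i> * of_real (Psi t))) \<le> B" if "t \<in> {1/4..1/2} - {}" for t
    using D_le[of t] that unfolding norm_mult norm_of_real by simp
  moreover have "0 \<le> B" unfolding B_def using lam(1) by simp
  ultimately have "norm (integral {1/4..1/2} (\<lambda>t. of_real (bump t) * exp (\<i> * of_real (Psi t))))
           \<le> B * Henstock_Kurzweil_Integration.content {1/4..1/2::real}"
    using has_integral_bound_real[OF _ _ by_parts] by blast
  then show ?thesis by (simp add: B_def mult.commute)
qed

definition chirp :: "real \<Rightarrow> nat \<Rightarrow> real \<Rightarrow> complex" where
  "chirp x m t = of_real (scale m * bump t) * exp (\<i> * of_real ((t - x)^2 / (4 * (scale m)^2)))"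

text \<open>The integrand of \<open>L\<^sub>a f(u)\<close> at \<open>a = scale n\<^sup>2\<close> and \<open>b(a) u = x\<close> is
  \<open>f \<cdot> kernel x n\<close>; the kernel cancels the oscillation of \<open>chirp x n\<close> exactly.\<close>
definition kernel :: "real \<Rightarrow> nat \<Rightarrow> real \<Rightarrow> complex" where
  "kernel x n t = exp (- \<i> * of_real ((x - t)^2 / (4 * (scale n)^2)))"

lemma norm_chirp: "norm (chirp x m t) = scale m * bump t"
  unfolding chirp_def using scale_pos[of m] bump_nonneg[of t] by (simp add: norm_mult)

lemma norm_chirp_le: "norm (chirp x m t) \<le> scale m / 64"
  using bump_le[of t] scale_pos[of m] by (simp add: norm_chirp)

lemma chirp_eq_0: "t \<notin> {1/4<..<1/2} \<Longrightarrow> chirp x m t = 0"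
  unfolding chirp_def by (simp add: bump_eq_0)

lemma summable_chirp: "summable (\<lambda>m. chirp (X m) m t)"
proof (rule summable_comparison_test[OF _ summable_scale])
  have "norm (chirp (X n) n t) \<le> scale n" for n
    using norm_chirp_le[of "X n" n t] scale_pos[of n] by linarith
  then show "\<exists>N. \<forall>n\<ge>N. norm (chirp (X n) n t) \<le> scale n" by blast
qed

lemma continuous_on_chirp: "continuous_on {1/4..1/2} (chirp x m)"
proof -
  have "continuous_on {1/4..1/2} (\<lambda>t. of_real (scale m * ((t - 1/4) * (1/2 - t))) *
      exp (\<i> * complex_of_real ((t - x)^2 / (4 * (scale m)^2))))"
    using scale_pos[of m] by (intro continuous_intros) auto
  then show ?thesis by (rule continuous_on_cong[THEN iffD1, rotated 2]) (auto simp: chirp_def bump_def)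
qed

lemma continuous_on_kernel: "continuous_on S (kernel x n)"
  unfolding kernel_def using scale_pos[of n] by (intro continuous_intros) auto

lemma chirp_lipschitz_on:
  assumes x: "\<bar>x\<bar> \<le> 1/160" and t1: "t1 \<in> {1/4..1/2}" and t2: "t2 \<in> {1/4..1/2}"
  shows "norm (chirp x m t1 - chirp x m t2) \<le> \<bar>t1 - t2\<bar> / scale m"
proof -
  define s where "s = scale m"
  have s: "0 < s" "s \<le> 1/10000" using scale_pos scale_le s_def by auto
  define e where "e t = exp (\<i> * complex_of_real ((t - x)^2 / (4 * s^2)))" for t
  have "chirp x m t1 - chirp x m t2 = of_real (s * (bump t1 - bump t2)) * e t1
      + of_real (s * bump t2) * (e t1 - e t2)"
    unfolding chirp_def e_def s_def by (simp add: algebra_simps)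
  moreover have "norm (of_real (s * (bump t1 - bump t2)) * e t1) = s * \<bar>bump t1 - bump t2\<bar>"
    using s by (simp add: norm_mult e_def abs_mult del: of_real_diff)
  moreover have "norm (of_real (s * bump t2) * (e t1 - e t2)) = s * bump t2 * norm (e t1 - e t2)"
    using s bump_nonneg[of t2] by (simp add: norm_mult abs_mult)
  ultimately have "norm (chirp x m t1 - chirp x m t2) \<le> s * \<bar>bump t1 - bump t2\<bar> + s * bump t2 * norm (e t1 - e t2)"
    by (metis norm_triangle_ineq)
  also have "\<dots> \<le> s * (\<bar>t1 - t2\<bar> / 4) + s * (1/64) * (2 * (\<bar>t1 - t2\<bar> * (41/40) / (4 * s^2)))"
  proof (intro add_mono mult_left_mono mult_mono)
    have "bump t1 - bump t2 = (t1 - t2) * (3/4 - t1 - t2)"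
      using t1 t2 by (simp add: bump_def field_simps)
    moreover have "\<bar>3/4 - t1 - t2\<bar> \<le> 1/4" unfolding abs_le_iff using t1 t2 by auto
    ultimately show "\<bar>bump t1 - bump t2\<bar> \<le> \<bar>t1 - t2\<bar> / 4"
      using mult_left_mono[of "\<bar>3/4 - t1 - t2\<bar>" "1/4" "\<bar>t1 - t2\<bar>"] by (simp add: abs_mult)
    have "norm (e t1 - e t2) \<le> 2 * \<bar>(t1 - x)^2 / (4 * s^2) - (t2 - x)^2 / (4 * s^2)\<bar>"
      unfolding e_def by (rule norm_exp_i_diff_le)
    also have "\<bar>(t1 - x)^2 / (4 * s^2) - (t2 - x)^2 / (4 * s^2)\<bar> = \<bar>t1 - t2\<bar> * \<bar>t1 + t2 - 2 * x\<bar> / (4 * s^2)"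
      by (simp add: diff_divide_distrib[symmetric] abs_mult[symmetric] power2_eq_square algebra_simps)
    also have "\<dots> \<le> \<bar>t1 - t2\<bar> * (41/40) / (4 * s^2)"
      using t1 t2 x by (intro divide_right_mono mult_left_mono) auto
    finally show "norm (e t1 - e t2) \<le> 2 * (\<bar>t1 - t2\<bar> * (41/40) / (4 * s^2))" by simp
  qed (use s bump_le bump_nonneg in auto)
  also have "\<dots> = \<bar>t1 - t2\<bar> * ((s * s / 4 + 41/5120) / s)"
    using s by (simp add: field_simps power2_eq_square)
  also have "\<dots> \<le> \<bar>t1 - t2\<bar> * (1 / s)"
    using s mult_le_one[of s s] by (intro mult_left_mono divide_right_mono) auto
  finally show ?thesis by (simp add: s_def)
qed

lemma chirp_lipschitz:
  assumes "\<bar>x\<bar> \<le> 1/160"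
  shows "norm (chirp x m t1 - chirp x m t2) \<le> \<bar>t1 - t2\<bar> / scale m"
  using lipschitz_extend_by_zero[of "1/4" "1/2" "chirp x m" "1 / scale m" t1 t2]
    chirp_eq_0 chirp_lipschitz_on[OF assms] scale_pos[of m] by auto

lemma chirp_sum_holder_half:
  assumes "\<And>m. \<bar>X m\<bar> \<le> 1/160"
  shows "norm ((\<Sum>m. chirp (X m) m t1) - (\<Sum>m. chirp (X m) m t2)) \<le> 4 * sqrt \<bar>t1 - t2\<bar>"
proof (rule lacunary_sum_holder_half[of "\<lambda>m. chirp (X m) m"])
  show "norm (chirp (X m) m t) \<le> scale m" for m t
    using norm_chirp_le[of "X m" m t] scale_pos[of m] by linarith
qed (rule chirp_lipschitz[OF assms])

lemma holder_half_supp_chirp_sum: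
  assumes "\<And>m. \<bar>X m\<bar> \<le> 1/160"
  shows "holder_half_supp (\<lambda>t. \<Sum>m. chirp (X m) m t)"
  unfolding holder_half_supp_def
proof (intro conjI allI impI exI)
  show "(\<Sum>m. chirp (X m) m t) = 0" if "t \<notin> {1/4..1/2}" for t
  proof -
    have "t \<notin> {1/4<..<1/2}" using that by auto
    then show ?thesis by (simp add: chirp_eq_0)
  qed
  show "norm ((\<Sum>m. chirp (X m) m t1) - (\<Sum>m. chirp (X m) m t2)) \<le> 4 * sqrt \<bar>t1 - t2\<bar>" for t1 t2
    by (rule chirp_sum_holder_half[OF assms])
qed

lemma chirp_times_kernel:
  "chirp x m t * kernel y n t = of_real (scale m) *
     (of_real (bump t) * exp (\<i> * of_real ((t - x)^2 / (4 * (scale m)^2) - (y - t)^2 / (4 * (scale n)^2))))"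
  unfolding chirp_def kernel_def by (simp add: mult_exp_exp algebra_simps)

lemma integral_chirp_times_kernel_diag:
  "integral {1/4..1/2} (\<lambda>t. chirp x n t * kernel x n t) = of_real (scale n / 384)"
proof -
  have "(\<lambda>t. chirp x n t * kernel x n t) = (\<lambda>t. of_real (scale n) * of_real (bump t))"
    by (simp add: chirp_times_kernel power2_commute)
  then have "((\<lambda>t. chirp x n t * kernel x n t) has_integral of_real (scale n) * of_real (1/384)) {1/4..1/2}"
    using has_integral_mult_right[OF has_integral_bump] by simp
  then show ?thesis by (simp add: integral_unique)
qed

text \<open>For \<open>m < n\<close> the phase of \<open>chirp x m \<cdot> kernel y n\<close> is dominated by the kernel, whose
  frequency exceeds that of the chirp by a factor \<open>\<ge> 10\<^sup>4\<close>; hence the integral is small.\<close>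
lemma norm_integral_chirp_times_kernel_le:
  assumes "m < n" and x: "\<bar>x\<bar> \<le> 1/160" and y: "\<bar>y\<bar> \<le> 1/160"
  shows "norm (integral {1/4..1/2} (\<lambda>t. chirp x m t * kernel y n t)) \<le> scale m * (scale n)^2"
proof -
  define a where "a = (scale n)^2"
  define c where "c = (scale m)^2"
  have a: "0 < a" unfolding a_def using scale_pos[of n] by simp
  have "scale n \<le> scale m / 100" by (rule scale_less[OF \<open>m < n\<close>])
  then have ca: "10000 * a \<le> c"
    using power_mono[of "scale n" "scale m / 100" 2] scale_pos[of n] by (simp add: a_def c_def power_divide)
  define u where "u = 1 / (2 * a)"
  define v where "v = 1 / (2 * c)"
  have u: "0 < u" and v: "0 < v" and vu: "v \<le> u / 10000"
    using a ca by (auto simp: u_def v_def field_simps)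
  define Psi where "Psi t = (t - x)^2 / (4 * (scale m)^2) - (y - t)^2 / (4 * (scale n)^2)" for t
  have dPsi: "(Psi has_real_derivative v * (t - x) - u * (t - y)) (at t)" for t
    unfolding Psi_def u_def v_def a_def c_def using scale_pos[of m] scale_pos[of n]
    by (auto intro!: derivative_eq_intros simp: field_simps power2_eq_square)
  have dPsi': "((\<lambda>t. v * (t - x) - u * (t - y)) has_real_derivative v - u) (at t)" for t
    by (rule derivative_eq_intros refl)+ simp
  have "u / 5 \<le> \<bar>v * (t - x) - u * (t - y)\<bar>" if "t \<in> {1/4..1/2}" for t
  proof -
    have "u * (6/25) \<le> u * (t - y)" using u that y by (intro mult_left_mono) (auto simp: abs_le_iff)
    moreover have "v * (t - x) \<le> (u / 10000) * (1/2 + 1/160)"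
      using vu v that x by (intro mult_mono) (auto simp: abs_le_iff)
    ultimately show ?thesis using u by (simp add: abs_if algebra_simps)
  qed
  from norm_integral_bump_exp_le[OF dPsi dPsi' _ this]
  have "norm (integral {1/4..1/2} (\<lambda>t. of_real (bump t) * exp (\<i> * of_real (Psi t))))
        \<le> (1/4) * ((1/4) / (u/5) + (1/64) * \<bar>v - u\<bar> / (u/5)^2)"
    using u by simp
  also have "\<dots> \<le> (1/4) * ((1/4) / (u/5) + (1/64) * u / (u/5)^2)"
    using u v vu by (intro mult_left_mono add_left_mono divide_right_mono mult_left_mono) auto
  also have "\<dots> \<le> a" using a by (simp add: u_def field_simps power2_eq_square)
  finally show ?thesis
    using scale_pos[of m] mult_left_mono
    by (simp add: chirp_times_kernel Psi_def a_def norm_mult integral_mult_right)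
qed

lemma norm_chirp_tail_le: "norm (\<Sum>k. chirp (X (k + N)) (k + N) t) \<le> scale N / 63"
proof -
  have summable: "summable (\<lambda>k. scale (k + N) / 64)"
    using summable_divide[OF summable_ignore_initial_segment[OF summable_scale]] .
  have "norm (\<Sum>k. chirp (X (k + N)) (k + N) t) \<le> (\<Sum>k. scale (k + N) / 64)"
    by (rule norm_suminf_le[OF norm_chirp_le summable])
  also have "\<dots> = scale N * 100 / 99 / 64"
    using suminf_divide[OF summable_ignore_initial_segment[OF summable_scale]] by (simp add: suminf_scale_shift)
  finally show ?thesis using scale_pos[of N] by simp
qed

lemma norm_sum_integral_chirp_times_kernel_le:
  assumes X: "\<And>m. \<bar>X m\<bar> \<le> 1/160"
  shows "norm (\<Sum>m<n. integral {1/4..1/2} (\<lambda>t. chirp (X m) m t * kernel (X n) n t)) \<le> (scale n)^2"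
proof -
  have "norm (\<Sum>m<n. integral {1/4..1/2} (\<lambda>t. chirp (X m) m t * kernel (X n) n t)) \<le> (\<Sum>m<n. scale m * (scale n)^2)"
    using norm_integral_chirp_times_kernel_le[OF _ X X] by (intro order_trans[OF norm_sum] sum_mono) simp
  also have "\<dots> = (\<Sum>m<n. scale m) * (scale n)^2" by (simp add: sum_distrib_right)
  also have "(\<Sum>m<n. scale m) \<le> (\<Sum>m. scale m)"
    using summable_scale scale_pos by (intro sum_le_suminf) (auto intro: less_imp_le)
  also have "(\<Sum>m. scale m) \<le> 1" using suminf_scale_shift[of 0] scale_le[of 0] by simp
  finally show ?thesis by (simp add: mult_right_mono)
qed

lemma norm_integral_chirp_tail_times_kernel_le:
  assumes "(\<lambda>t. (\<Sum>k. chirp (X (k + N)) (k + N) t) * kernel y n t) integrable_on {1/4..1/2}"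
  shows "norm (integral {1/4..1/2} (\<lambda>t. (\<Sum>k. chirp (X (k + N)) (k + N) t) * kernel y n t))
           \<le> scale N / 252"
proof -
  have "norm ((\<Sum>k. chirp (X (k + N)) (k + N) t) * kernel y n t) \<le> scale N / 63" for t
    using norm_chirp_tail_le[of X N t] by (simp add: kernel_def norm_mult)
  then have "norm (integral {1/4..1/2} (\<lambda>t. (\<Sum>k. chirp (X (k + N)) (k + N) t) * kernel y n t))
      \<le> scale N / 63 * Henstock_Kurzweil_Integration.content {1/4..1/2::real}"
    by (intro has_integral_bound_real[OF _ _ integrable_integral[OF assms], where S="{}"])
       (use scale_pos[of N] in auto)
  then show ?thesis by simp
qed

lemma integral_UNIV_chirp_sum_times:
  "integral UNIV (\<lambda>t. (\<Sum>m. chirp (X m) m t) * g t) = integral {1/4..1/2} (\<lambda>t. (\<Sum>m. chirp (X m) m t) * g t)"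
proof -
  have "(\<Sum>m. chirp (X m) m t) = 0" if "t \<notin> {1/4..1/2}" for t
  proof -
    have "t \<notin> {1/4<..<1/2}" using that by auto
    then show ?thesis by (simp add: chirp_eq_0)
  qed
  then have "(\<lambda>t. (\<Sum>m. chirp (X m) m t) * g t)
      = (\<lambda>t. if t \<in> {1/4..1/2} then (\<Sum>m. chirp (X m) m t) * g t else 0)" by auto
  then show ?thesis
    using integral_restrict_UNIV[of "{1/4..1/2}" "\<lambda>t. (\<Sum>m. chirp (X m) m t) * g t"] by argo
qed

lemma norm_integral_chirp_sum_times_kernel_ge:
  assumes X: "\<And>m. \<bar>X m\<bar> \<le> 1/160"
  shows "scale n / 500 \<le> norm (integral UNIV (\<lambda>t. (\<Sum>m. chirp (X m) m t) * kernel (X n) n t))"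
proof -
  define I :: "real set" where "I = {1/4..1/2}"
  define K where "K = kernel (X n) n"
  define F where "F t = (\<Sum>m. chirp (X m) m t) * K t" for t
  define T where "T t = (\<Sum>k. chirp (X (k + Suc n)) (k + Suc n) t) * K t" for t
  define h where "h m t = chirp (X m) m t * K t" for m t
  have F_split: "F t = T t + (\<Sum>m<n. h m t) + h n t" for t
    using suminf_split_initial_segment[OF summable_chirp, of X t "Suc n"]
    by (simp add: F_def T_def h_def algebra_simps sum_distrib_left)
  have h_int: "h m integrable_on I" for m
    unfolding h_def I_def K_def
    by (intro integrable_continuous_interval continuous_on_mult continuous_on_chirp continuous_on_kernel)
  have "F integrable_on I"
    unfolding I_def F_def K_def
    by (intro integrable_continuous_interval continuous_on_mult continuous_on_kernel
        continuous_on_if_holder[OF chirp_sum_holder_half[OF X]])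
  then have "(\<lambda>t. F t - ((\<Sum>m<n. h m t) + h n t)) integrable_on I"
    by (intro integrable_diff integrable_add integrable_sum h_int) auto
  then have T_int: "T integrable_on I" by (simp add: F_split)
  have "integral I F = integral I T + (\<Sum>m<n. integral I (h m)) + integral I (h n)"
    unfolding F_split by (simp add: integral_add integral_sum integrable_add integrable_sum T_int h_int)
  then have "norm (integral I (h n)) \<le> norm (integral I F) + norm (integral I T) + norm (\<Sum>m<n. integral I (h m))"
    using norm_triangle_ineq4[of "integral I F - integral I T" "\<Sum>m<n. integral I (h m)"]
      norm_triangle_ineq4[of "integral I F" "integral I T"]
    by (simp add: algebra_simps)
  moreover have "norm (integral I (h n)) = scale n / 384"
    unfolding h_def I_def K_def integral_chirp_times_kernel_diag using scale_pos[of n] by simp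
  moreover have "norm (integral I T) \<le> scale n / 25200"
  proof -
    have "norm (integral I T) \<le> scale (Suc n) / 252"
      unfolding I_def T_def K_def
      by (rule norm_integral_chirp_tail_times_kernel_le[OF T_int[unfolded I_def T_def K_def]])
    then show ?thesis by (simp add: scale_Suc)
  qed
  moreover have "norm (\<Sum>m<n. integral I (h m)) \<le> scale n / 10000"
  proof -
    have "norm (\<Sum>m<n. integral I (h m)) \<le> (scale n)^2"
      unfolding h_def I_def K_def by (rule norm_sum_integral_chirp_times_kernel_le[OF X])
    also have "\<dots> \<le> scale n / 10000"
      using scale_pos[of n] scale_le[of n] by (simp add: power2_eq_square mult_left_mono)
    finally show ?thesis .
  qed
  ultimately have "scale n / 500 \<le> norm (integral I F)"
    using scale_pos[of n] by linarith
  also have "integral I F = integral UNIV (\<lambda>t. (\<Sum>m. chirp (X m) m t) * kernel (X n) n t)"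
    unfolding F_def K_def I_def by (rule integral_UNIV_chirp_sum_times[symmetric])
  finally show ?thesis .
qed

lemma norm_Lop_chirp_sum_ge:
  assumes X: "\<And>m. \<bar>b ((scale m)^2) * u\<bar> \<le> 1/160"
  shows "1/2000 \<le> norm (Lop b ((scale n)^2) (\<lambda>t. \<Sum>m. chirp (b ((scale m)^2) * u) m t) u)"
proof -
  define J where "J = integral UNIV (\<lambda>t. (\<Sum>m. chirp (b ((scale m)^2) * u) m t) * kernel (b ((scale n)^2) * u) n t)"
  define c where "c = sqrt (2 * pi) * sqrt 2 * scale n"
  have "norm (Lop b ((scale n)^2) (\<lambda>t. \<Sum>m. chirp (b ((scale m)^2) * u) m t) u) = norm J / c"
    using scale_pos[of n]
    by (simp add: Lop_def J_def c_def kernel_def norm_mult norm_divide real_sqrt_mult)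
  moreover have "(scale n / 500) / (4 * scale n) \<le> norm J / c"
  proof (rule frac_le)
    show "scale n / 500 \<le> norm J"
      unfolding J_def by (rule norm_integral_chirp_sum_times_kernel_ge[OF X])
    have "sqrt (2 * pi) * sqrt 2 = 2 * sqrt pi"
      by (simp add: real_sqrt_mult mult.commute mult.left_commute)
    moreover have "sqrt pi \<le> 2"
      using real_sqrt_le_mono[of pi 4] pi_less_4 by simp
    ultimately show "c \<le> 4 * scale n"
      unfolding c_def using scale_pos[of n] by (simp add: mult_right_mono)
    show "0 < c" unfolding c_def using scale_pos[of n] by simp
  qed simp
  ultimately show ?thesis using scale_pos[of n] by simp
qed

theorem proposition1:
  fixes M :: real and b :: "real \<Rightarrow> real"
  assumes "M > 0"
    and "\<forall>a\<in>{0..1}. \<bar>b a\<bar> \<le> M"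
    and "b 0 = 1"
  shows "\<exists>f u0. holder_half_supp f \<and> u0 \<in> {0<..<1 / (80 * M)} \<and>
           \<not> ((\<lambda>a. Lop b a f u0) \<longlongrightarrow> Lop b 0 f u0) (at_right 0)"
proof -
  have "1 \<le> M" using assms(2,3) by force
  define u0 where "u0 = 1 / (160 * M)"
  have u0: "u0 \<in> {0<..<1 / (80 * M)}" "u0 \<le> 1/160"
    using \<open>1 \<le> M\<close> by (simp_all add: u0_def field_simps)
  have X: "\<bar>b ((scale m)^2) * u0\<bar> \<le> 1/160" for m
  proof -
    have "(scale m)^2 \<in> {0..1}" using scale_pos[of m] scale_le[of m] by (simp add: power_le_one)
    then have "\<bar>b ((scale m)^2)\<bar> * u0 \<le> M * u0" using assms(2) u0 by (intro mult_right_mono) auto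
    then show ?thesis using u0 \<open>1 \<le> M\<close> by (simp add: abs_mult u0_def)
  qed
  define f where "f t = (\<Sum>m. chirp (b ((scale m)^2) * u0) m t)" for t
  have "holder_half_supp f"
    unfolding f_def by (rule holder_half_supp_chirp_sum) (rule X)
  moreover have "\<not> ((\<lambda>a. Lop b a f u0) \<longlongrightarrow> Lop b 0 f u0) (at_right 0)"
  proof
    assume lim: "((\<lambda>a. Lop b a f u0) \<longlongrightarrow> Lop b 0 f u0) (at_right 0)"
    have "Lop b 0 f u0 = f u0" by (simp only: Lop_def simp_thms if_True assms(3) mult_1)
    also have "f u0 = 0" using u0 by (simp add: f_def chirp_eq_0)
    finally have "Lop b 0 f u0 = 0" .
    with filterlim_compose[OF lim filterlim_scale_sq_at_right_0]
    have "(\<lambda>n. norm (Lop b ((scale n)^2) f u0)) \<longlonglongrightarrow> 0"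
      by (simp add: o_def tendsto_norm_zero)
    moreover have "\<forall>n. 1/2000 \<le> norm (Lop b ((scale n)^2) f u0)"
      unfolding f_def using norm_Lop_chirp_sum_ge[of b u0, OF X] by blast
    ultimately have "1/2000 \<le> (0::real)" by (intro LIMSEQ_le_const) blast+
    then show False by simp
  qed
  ultimately show ?thesis using u0(1) by blast
qed

end
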